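(* Let $q$ be a prime power, $e\ge 2$ even, $r$ a positive integer, $a\in\mathbb{F}_{q^e}$ with $a\neq 0$, $f(x)=x^r(x^{q-1}+a)$, and $\ell=q^{e-1}+\cdots+q+1$. If $r\bmod\ell=hq+1$ for an integer $h$ with $q+1\nmid h$, then $f(x)$ does not permute $\mathbb{F}_{q^e}$.
   Context: $r\bmod\ell$ denotes the least nonnegative residue of $r$ modulo $\ell$. *)

theory Defs
  imports "HOL-Computational_Algebra.Primes"
begin

definition prime_power :: "nat \<Rightarrow> bool" where
  "prime_power q \<longleftrightarrow> (\<exists>p k. prime p \<and> k \<ge> 1 \<and> q = p ^ k)"

end

(*
  Hermite's criterion: if f permutes a field with Q = q^e elements, then the sum of f(x)^t over
  the field vanishes for 0 < t < Q - 1, because the sum of x^k is -1 when Q - 1 divides k > 0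
  and 0 otherwise. Write e = 2m and s = 1 + q^2 + ... + q^(2m-2), so that l = (q + 1) s, and take
  t = (q - 1) s. Since q-th powers are additive, (x^(q-1) + a)^t expands into a sum over digit
  vectors J in {0..q-1}^m of monomials x^((q-1) N(J)) with N(J) = sum J_i q^(2i) <= (q - 1) s.
  So the power sum of f^t collects the coefficients of those J with l dividing r s + N(J).
  The hypothesis on r mod l yields d < q with q + 1 dividing r + d, and then only the constant
  vector J = (d, ..., d) qualifies: the power sum is -prod (-a^(q^(2i)))^(q-1-d), which is nonzero.
*)

theory Submission
  imports
    Defs
    "HOL-Computational_Algebra.Polynomial"
    "HOL-Library.Cardinality"
    "HOL-Library.FuncSet"
    "HOL-Number_Theory.Residues"
begin

lemma finite_field_power_card_minus_one:
  fixes x :: "'a :: {field, finite}"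
  assumes "x \<noteq> 0"
  shows "x ^ (CARD('a) - 1) = 1"
proof -
  have "(\<Prod>y\<in>UNIV-{0}. x * y) = (\<Prod>y\<in>UNIV-{0}. y)"
    by (rule prod.reindex_bij_witness[of _ "\<lambda>y. y / x" "\<lambda>y. x * y"])
      (use assms in auto)
  moreover have "(\<Prod>y\<in>UNIV-{0}. x * y) = x ^ (CARD('a) - 1) * (\<Prod>y\<in>UNIV-{0}. y)"
    by (simp add: prod.distrib card_Diff_singleton)
  moreover have "(\<Prod>y\<in>UNIV-{0}. y) \<noteq> (0::'a)"
    by simp
  ultimately show ?thesis
    by simp
qed

lemma finite_field_exists_power_ne_one:
  assumes "0 < k" "k < CARD('a :: {field, finite}) - 1"
  shows "\<exists>c::'a. c \<noteq> 0 \<and> c ^ k \<noteq> 1"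
proof (rule ccontr)
  let ?P = "Polynomial.monom (1::'a) k - 1"
  assume "\<not> ?thesis"
  hence "UNIV - {0} \<subseteq> {x. poly ?P x = 0}"
    by (auto simp: poly_monom)
  hence "CARD('a) - 1 \<le> card {x. poly ?P x = 0}"
    by (metis card_Diff_singleton card_mono finite UNIV_I)
  also have "\<dots> \<le> degree ?P"
  proof (rule card_poly_roots_bound)
    show "?P \<noteq> 0"
    proof
      assume "?P = 0"
      hence "Polynomial.coeff ?P k = 0"
        by simp
      thus False
        using assms(1) by simp
    qed
  qed
  also have "\<dots> \<le> k"
    by (metis degree_diff_le degree_monom_le degree_1 le0)
  finally show False
    using assms(2) by simp
qed

lemma finite_field_sum_power:
  assumes "0 < k"
  shows "(\<Sum>x\<in>(UNIV :: 'a :: {field, finite} set). x ^ k) =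
    (if (CARD('a) - 1) dvd k then -1 else 0)"
proof (cases "(CARD('a) - 1) dvd k")
  case True
  then obtain j where j: "k = (CARD('a) - 1) * j" ..
  have "(\<Sum>x\<in>(UNIV :: 'a set). x ^ k) = (\<Sum>x\<in>UNIV - {0::'a}. x ^ k)"
    using assms by (intro sum.mono_neutral_right) auto
  also have "\<dots> = (\<Sum>x\<in>UNIV - {0::'a}. 1)"
    using finite_field_power_card_minus_one[where ?'a = 'a]
    by (intro sum.cong refl) (simp add: j power_mult)
  also have "\<dots> = of_nat CARD('a) - 1"
    using finite_UNIV_card_ge_0[where ?'a = 'a] by (simp add: card_Diff_singleton of_nat_diff)
  also have "of_nat CARD('a) = (0::'a)"
    using CHAR_dvd_CARD[where ?'a = 'a] of_nat_eq_0_iff_char_dvd by blast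
  finally show ?thesis
    using True by simp
next
  case False
  define k' where "k' = k mod (CARD('a) - 1)"
  have "CARD('a) - 1 > 0"
    using card_mono[of UNIV "{0::'a, 1}"] by simp
  hence "0 < k'" "k' < CARD('a) - 1"
    using False by (simp_all add: k'_def mod_greater_zero_iff_not_dvd)
  then obtain c :: 'a where c: "c \<noteq> 0" "c ^ k' \<noteq> 1"
    using finite_field_exists_power_ne_one by blast
  have "c ^ k = (c ^ (CARD('a) - 1)) ^ (k div (CARD('a) - 1)) * c ^ k'"
    unfolding k'_def power_mult[symmetric] power_add[symmetric] by (simp only: mult_div_mod_eq)
  hence ck: "c ^ k \<noteq> 1"
    using c finite_field_power_card_minus_one[OF c(1)] by simp
  \<comment> \<open>substituting \<open>c x\<close> for \<open>x\<close> multiplies the sum by \<open>c ^ k \<noteq> 1\<close>\<close>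
  have "(\<Sum>x\<in>(UNIV :: 'a set). x ^ k) = (\<Sum>x\<in>(UNIV :: 'a set). (c * x) ^ k)"
    by (rule sum.reindex_bij_witness[of _ "\<lambda>y. c * y" "\<lambda>y. y / c"]) (use c in auto)
  also have "\<dots> = c ^ k * (\<Sum>x\<in>(UNIV :: 'a set). x ^ k)"
    by (simp add: power_mult_distrib sum_distrib_left)
  finally have "(1 - c ^ k) * (\<Sum>x\<in>(UNIV :: 'a set). x ^ k) = 0"
    by (simp add: algebra_simps)
  thus ?thesis
    using False ck by simp
qed

lemma bij_sum_power_eq_zero:
  fixes f :: "'a :: {field, finite} \<Rightarrow> 'a"
  assumes "bij f" "0 < t" "t < CARD('a) - 1"
  shows "(\<Sum>x\<in>UNIV. f x ^ t) = 0"
proof -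
  have "(\<Sum>x\<in>UNIV. f x ^ t) = (\<Sum>y\<in>(UNIV :: 'a set). y ^ t)"
    using sum.reindex_bij_betw[of f UNIV UNIV "\<lambda>y. y ^ t"] assms(1) by simp
  thus ?thesis
    using assms(2,3) by (simp add: finite_field_sum_power nat_dvd_not_less)
qed

lemma sum_UNIV_monomials:
  fixes C :: "'b \<Rightarrow> 'a :: {field, finite}"
  assumes "finite P" "\<And>J. J \<in> P \<Longrightarrow> 0 < e J"
  shows "(\<Sum>x\<in>UNIV. \<Sum>J\<in>P. C J * x ^ e J) =
    - (\<Sum>J | J \<in> P \<and> (CARD('a) - 1) dvd e J. C J)"
proof -
  have "(\<Sum>x\<in>UNIV. \<Sum>J\<in>P. C J * x ^ e J) =
      (\<Sum>J\<in>P. C J * (\<Sum>x\<in>(UNIV :: 'a set). x ^ e J))"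
    by (subst sum.swap) (simp add: sum_distrib_left)
  also have "\<dots> = (\<Sum>J\<in>P. if (CARD('a) - 1) dvd e J then - C J else 0)"
    using assms(2) by (intro sum.cong refl) (simp add: finite_field_sum_power)
  also have "\<dots> = - (\<Sum>J | J \<in> P \<and> (CARD('a) - 1) dvd e J. C J)"
    using assms(1) by (simp add: sum.If_cases sum_negf Int_def conj_commute)
  finally show ?thesis .
qed

lemma prime_power_ge_two:
  assumes "prime_power q"
  shows "2 \<le> q"
proof -
  obtain p k where "prime p" "k \<ge> 1" "q = p ^ k"
    using assms unfolding prime_power_def by blast
  thus ?thesis
    using prime_ge_2_nat[of p] self_le_power[of p k] by simp
qed

lemma prime_power_card_frobenius:
  assumes "prime_power q" "CARD('a :: {field, finite}) = q ^ e"
  shows "of_nat q = (0 :: 'a)" and "\<And>u v :: 'a. (u + v) ^ q = u ^ q + v ^ q"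
proof -
  obtain p k where p: "prime p" "q = p ^ k" "k \<ge> 1"
    using assms(1) unfolding prime_power_def by blast
  have char_prime: "prime CHAR('a)"
    by (rule prime_CHAR_semidom[OF finite_imp_CHAR_pos]) simp
  have "CHAR('a) dvd p ^ (k * e)"
    using CHAR_dvd_CARD[where ?'a = 'a] assms(2) p(2) by (simp add: power_mult)
  hence "CHAR('a) = p"
    using char_prime p(1) prime_dvd_power primes_dvd_imp_eq by blast
  thus "of_nat q = (0 :: 'a)"
    using p(2,3) by (simp add: of_nat_eq_0_iff_char_dvd)
  show "(u + v) ^ q = u ^ q + v ^ q" for u v :: 'a
    using freshmans_dream'[OF char_prime] \<open>CHAR('a) = p\<close> p(2) by blast
qed

lemma additive_power_iterate:
  fixes u v :: "'a :: comm_semiring_1"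
  assumes "\<And>u v :: 'a. (u + v) ^ q = u ^ q + v ^ q"
  shows "(u + v) ^ (q ^ n) = u ^ (q ^ n) + v ^ (q ^ n)"
  by (induction n arbitrary: u v) (simp_all add: assms power_mult)

lemma additive_power_pred_eq_sum:
  fixes y b :: "'a :: field"
  assumes "2 \<le> q" "of_nat q = (0 :: 'a)"
    and frob: "\<And>u v :: 'a. (u + v) ^ q = u ^ q + v ^ q"
  shows "(y + b) ^ (q - 1) = (\<Sum>j<q. y ^ j * (- b) ^ (q - 1 - j))"
proof (cases "y + b = 0")
  case True
  hence "(\<Sum>j<q. y ^ j * (- b) ^ (q - 1 - j)) = of_nat q * y ^ (q - 1)"
    by (simp add: add_eq_0_iff flip: power_add)
  thus ?thesis
    using True assms(1,2) by simp
next
  case False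
  have "(- b) ^ q = - (b ^ q)"
    using frob[of "- b" b] assms(1) by (simp add: power_0_left eq_neg_iff_add_eq_0)
  hence "(y + b) ^ q = (y + b) * (\<Sum>j<q. y ^ j * (- b) ^ (q - 1 - j))"
    using frob[of y b] power_diff_sumr2[of y q "- b"] by (simp add: mult.commute)
  moreover have "(y + b) ^ q = (y + b) * (y + b) ^ (q - 1)"
    using assms(1) by (simp flip: power_Suc)
  ultimately show ?thesis
    using False by simp
qed

lemma additive_power_expansion:
  fixes y b :: "'a :: field" and m :: nat
  assumes "2 \<le> q" "of_nat q = (0 :: 'a)"
    and frob: "\<And>u v :: 'a. (u + v) ^ q = u ^ q + v ^ q"
  shows "(y + b) ^ ((q - 1) * (\<Sum>i<m. q ^ g i)) =
    (\<Sum>J\<in>PiE {..<m} (\<lambda>_. {..<q}).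
       y ^ (\<Sum>i<m. q ^ g i * J i) * (\<Prod>i<m. (- (b ^ q ^ g i)) ^ (q - 1 - J i)))"
proof -
  have "(y + b) ^ ((q - 1) * (\<Sum>i<m. q ^ g i)) = (\<Prod>i<m. ((y + b) ^ q ^ g i) ^ (q - 1))"
    by (simp add: sum_distrib_left power_sum mult.commute flip: power_mult)
  also have "\<dots> = (\<Prod>i<m. \<Sum>j<q. y ^ (q ^ g i * j) * (- (b ^ q ^ g i)) ^ (q - 1 - j))"
    using additive_power_iterate[OF frob] additive_power_pred_eq_sum[OF assms]
    by (simp add: power_mult)
  also have "\<dots> = (\<Sum>J\<in>PiE {..<m} (\<lambda>_. {..<q}).
      \<Prod>i<m. y ^ (q ^ g i * J i) * (- (b ^ q ^ g i)) ^ (q - 1 - J i))"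
    by (rule prod_sum_PiE) auto
  also have "\<dots> = (\<Sum>J\<in>PiE {..<m} (\<lambda>_. {..<q}).
      y ^ (\<Sum>i<m. q ^ g i * J i) * (\<Prod>i<m. (- (b ^ q ^ g i)) ^ (q - 1 - J i)))"
    by (simp add: prod.distrib power_sum)
  finally show ?thesis .
qed

lemma pred_mult_sum_power: "((q :: nat) - 1) * (\<Sum>i<n. q ^ i) = q ^ n - 1"
proof (cases "q = 0")
  case True
  thus ?thesis
    by (cases n) simp_all
next
  case False
  have "int ((q - 1) * (\<Sum>i<n. q ^ i)) = int (q ^ n - 1)"
    using False power_diff_1_eq[of "int q" n] by (simp add: of_nat_diff)
  thus ?thesis
    by (simp only: of_nat_eq_iff)
qed

lemma sum_power_double_upper: "(\<Sum>i<2 * m. (q :: nat) ^ i) = (q + 1) * (\<Sum>i<m. q ^ (2 * i))"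
  by (induction m) (simp_all add: algebra_simps power_add)

lemma sum_digits_less_power:
  fixes B :: nat
  assumes "\<And>i. i < m \<Longrightarrow> J i < B"
  shows "(\<Sum>i<m. B ^ i * J i) < B ^ m"
  using assms
proof (induction m)
  case (Suc m)
  have "(\<Sum>i<Suc m. B ^ i * J i) < B ^ m * (J m + 1)"
    using Suc by (simp add: algebra_simps)
  also have "\<dots> \<le> B ^ m * B"
    using Suc.prems[of m] by (intro mult_le_mono2) auto
  finally show ?case
    by (simp add: mult.commute)
qed simp

lemma inj_on_sum_digits:
  fixes B :: nat
  shows "inj_on (\<lambda>J. \<Sum>i<m. B ^ i * J i) (PiE {..<m} (\<lambda>_. {..<B}))"
proof (induction m)
  case (Suc m)
  show ?case
  proof (rule inj_onI)
    fix J J'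
    assume J: "J \<in> PiE {..<Suc m} (\<lambda>_. {..<B})"
      and J': "J' \<in> PiE {..<Suc m} (\<lambda>_. {..<B})"
      and eq: "(\<Sum>i<Suc m. B ^ i * J i) = (\<Sum>i<Suc m. B ^ i * J' i)"
    let ?S = "\<Sum>i<m. B ^ i * J i" and ?S' = "\<Sum>i<m. B ^ i * J' i"
    have euclid: "(S + C * j) div C = j" "(S + C * j) mod C = S" if "S < C" for S C j :: nat
      using that by simp_all
    have S: "?S < B ^ m" and S': "?S' < B ^ m"
      using J J' by (auto intro!: sum_digits_less_power simp: PiE_iff)
    have sums: "?S + B ^ m * J m = ?S' + B ^ m * J' m"
      using eq by simp
    have top: "J m = J' m"
      using euclid(1)[OF S, of "J m"] euclid(1)[OF S', of "J' m"] sums by argo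
    have low: "?S = ?S'"
      using euclid(2)[OF S, of "J m"] euclid(2)[OF S', of "J' m"] sums by argo
    have restr: "restrict J {..<m} = restrict J' {..<m}"
    proof (rule inj_onD[OF Suc.IH])
      show "(\<Sum>i<m. B ^ i * restrict J {..<m} i) = (\<Sum>i<m. B ^ i * restrict J' {..<m} i)"
        using low by simp
      show "restrict J {..<m} \<in> PiE {..<m} (\<lambda>_. {..<B})"
        and "restrict J' {..<m} \<in> PiE {..<m} (\<lambda>_. {..<B})"
        using J J' by (auto simp: PiE_iff)
    qed
    show "J = J'"
    proof (rule PiE_ext[OF J J'])
      fix i assume "i \<in> {..<Suc m}"
      then consider "i < m" | "i = m"
        by fastforce
      thus "J i = J' i"
        using fun_cong[OF restr, of i] top by cases auto
    qed
  qed
qed simp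

lemma dvd_add_iff_eq_if_dist_less:
  fixes l A M N :: nat
  assumes "l dvd A + M" "N < l + M" "M < l + N"
  shows "l dvd A + N \<longleftrightarrow> N = M"
proof
  assume "l dvd A + N"
  hence "int l dvd int (A + N) - int (A + M)"
    using assms(1) by (intro dvd_diff) (simp_all only: of_nat_dvd_iff)
  hence "int l dvd int N - int M"
    by simp
  moreover have "\<bar>int N - int M\<bar> < int l"
    using assms(2,3) by linarith
  ultimately show "N = M"
    using dvd_imp_le_int[of "int N - int M" "int l"] by fastforce
qed (use assms(1) in simp)

lemma complement_mod_succ_less:
  fixes r l q :: nat and h :: int
  assumes "int (r mod l) = h * int q + 1" "(q + 1) dvd l" "\<not> (int q + 1) dvd h"
  obtains d where "d < q" "(q + 1) dvd r + d"
proof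
  define Q where "Q = int q + 1"
  \<comment> \<open>as \<open>q \<equiv> -1 (mod Q)\<close>, \<open>r \<equiv> h q + 1 \<equiv> 1 - h\<close>; and \<open>d = q\<close> would force \<open>Q dvd h\<close>\<close>
  define d where "d = nat ((h - 1) mod Q)"
  have Q: "0 < Q"
    by (simp add: Q_def)
  have d: "int d = (h - 1) - Q * ((h - 1) div Q)"
    using Q by (simp add: d_def minus_mult_div_eq_mod)
  have "int (q + 1) dvd int l"
    using assms(2) by (simp only: of_nat_dvd_iff)
  hence "Q dvd int r - int (r mod l)"
    by (simp add: Q_def add.commute minus_mod_eq_mult_div flip: of_nat_diff)
  moreover have "int r + int d = (int r - int (r mod l)) + Q * (h - (h - 1) div Q)"
    using assms(1) d by (simp add: Q_def algebra_simps)
  ultimately have "Q dvd int (r + d)"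
    by (metis dvd_add dvd_triv_left of_nat_add)
  thus "(q + 1) dvd r + d"
    using of_nat_dvd_iff[of "q + 1" "r + d", where ?'a = int] by (simp add: Q_def add.commute)
  have "d \<noteq> q"
  proof
    assume "d = q"
    hence "h = Q * ((h - 1) div Q + 1)"
      using d by (simp add: Q_def algebra_simps)
    thus False
      using assms(3) unfolding Q_def by (metis dvd_triv_left)
  qed
  moreover have "d < q + 1"
    using pos_mod_bound[OF Q, of "h - 1"] by (simp add: d_def Q_def nat_less_iff add.commute)
  ultimately show "d < q"
    by simp
qed

lemma dvd_exponent_iff_constant_digits:
  fixes q m r d :: nat
  defines "s \<equiv> \<Sum>i<m. q ^ (2 * i)"
  assumes J: "J \<in> PiE {..<m} (\<lambda>_. {..<q})"
    and "0 < m" and d: "d < q" "(q + 1) dvd r + d"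
  shows "(q + 1) * s dvd r * s + (\<Sum>i<m. q ^ (2 * i) * J i) \<longleftrightarrow>
    J = restrict (\<lambda>_. d) {..<m}"
proof -
  let ?N = "\<lambda>J. \<Sum>i<m. q ^ (2 * i) * J i" and ?J0 = "restrict (\<lambda>_. d) {..<m}"
  have J0: "?J0 \<in> PiE {..<m} (\<lambda>_. {..<q})"
    using d(1) by simp
  have "0 < s"
    unfolding s_def using \<open>0 < m\<close> by (intro sum_pos2[of _ 0]) auto
  have "J i \<le> q - 1" if "i < m" for i
    using PiE_mem[OF J, of i] that by simp
  hence "?N J \<le> (\<Sum>i<m. q ^ (2 * i) * (q - 1))"
    by (intro sum_mono mult_le_mono2) simp
  also have "\<dots> = (q - 1) * s"
    unfolding s_def sum_distrib_left by (simp add: mult.commute)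
  finally have N_le: "?N J \<le> (q - 1) * s" .
  have N0: "?N ?J0 = d * s"
    unfolding s_def sum_distrib_left by (intro sum.cong) (auto simp: mult.commute)
  have "(q + 1) * s dvd r * s + d * s"
    using mult_dvd_mono[OF d(2) dvd_refl[of s]] by (simp add: add_mult_distrib)
  moreover have "d * s < (q + 1) * s" "(q - 1) * s < (q + 1) * s"
    using \<open>0 < s\<close> d(1) by (simp_all only: mult_less_cancel2) simp_all
  ultimately have "(q + 1) * s dvd r * s + ?N J \<longleftrightarrow> ?N J = ?N ?J0"
    using N_le N0 dvd_add_iff_eq_if_dist_less[of "(q + 1) * s" "r * s" "d * s" "?N J"] by linarith
  also have "\<dots> \<longleftrightarrow> J = ?J0"
  proof -
    have "PiE {..<m} (\<lambda>_. {..<q}) \<subseteq> PiE {..<m} (\<lambda>_. {..<q ^ 2})"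
      using d(1) by (intro PiE_mono) (auto simp: power2_eq_square dest: less_le_trans)
    hence "inj_on ?N (PiE {..<m} (\<lambda>_. {..<q}))"
      using inj_on_subset[OF inj_on_sum_digits[where B = "q ^ 2" and m = m]]
      by (simp add: power_mult)
    thus ?thesis
      using J J0 by (rule inj_on_eq_iff)
  qed
  finally show ?thesis .
qed

lemma sum_UNIV_power_binomial_eq:
  fixes a :: "'a :: {field, finite}" and q m r d :: nat
  defines "s \<equiv> \<Sum>i<m. q ^ (2 * i)"
  assumes q: "2 \<le> q" "of_nat q = (0 :: 'a)"
    and frob: "\<And>u v :: 'a. (u + v) ^ q = u ^ q + v ^ q"
    and card: "CARD('a) = q ^ (2 * m)"
    and "0 < m" "0 < r" and d: "d < q" "(q + 1) dvd r + d"
  shows "(\<Sum>x\<in>UNIV. (x ^ r * (x ^ (q - 1) + a)) ^ ((q - 1) * s)) =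
    - (\<Prod>i<m. (- (a ^ q ^ (2 * i))) ^ (q - 1 - d))"
proof -
  define P where "P = PiE {..<m} (\<lambda>_. {..<q})"
  define N where "N J = (\<Sum>i<m. q ^ (2 * i) * J i)" for J :: "nat \<Rightarrow> nat"
  define C where "C J = (\<Prod>i<m. (- (a ^ q ^ (2 * i))) ^ (q - 1 - J i))" for J
  define J0 where "J0 = restrict (\<lambda>_. d) {..<m}"
  have "0 < s"
    unfolding s_def using \<open>0 < m\<close> by (intro sum_pos2[of _ 0]) auto
  have expand: "(x ^ r * (x ^ (q - 1) + a)) ^ ((q - 1) * s) =
      (\<Sum>J\<in>P. C J * x ^ ((q - 1) * (r * s + N J)))" for x :: 'a
  proof -
    have "(x ^ (q - 1) + a) ^ ((q - 1) * s) = (\<Sum>J\<in>P. (x ^ (q - 1)) ^ N J * C J)"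
      unfolding s_def P_def N_def C_def by (rule additive_power_expansion[OF q frob])
    moreover have "x ^ (r * ((q - 1) * s)) * (x ^ (q - 1)) ^ N J = x ^ ((q - 1) * (r * s + N J))"
      for J
      by (simp add: distrib_left mult.left_commute flip: power_mult power_add)
    ultimately show ?thesis
      by (simp add: power_mult_distrib sum_distrib_left mult_ac flip: power_mult)
  qed
  have "(\<Sum>x\<in>UNIV. (x ^ r * (x ^ (q - 1) + a)) ^ ((q - 1) * s)) =
      - (\<Sum>J | J \<in> P \<and> (CARD('a) - 1) dvd (q - 1) * (r * s + N J). C J)"
    unfolding expand using \<open>0 < s\<close> \<open>0 < r\<close> q(1)
    by (intro sum_UNIV_monomials) (simp_all add: P_def finite_PiE)
  also have "{J. J \<in> P \<and> (CARD('a) - 1) dvd (q - 1) * (r * s + N J)} = {J0}"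
  proof -
    have "CARD('a) - 1 = (q - 1) * ((q + 1) * s)"
      using card pred_mult_sum_power[of q "2 * m"] sum_power_double_upper[of q m]
      by (simp add: s_def)
    moreover have "J0 \<in> P"
      using d(1) by (simp add: J0_def P_def)
    moreover have "(q - 1) * ((q + 1) * s) dvd (q - 1) * (r * s + N J) \<longleftrightarrow> J = J0"
      if "J \<in> P" for J
      using dvd_exponent_iff_constant_digits[OF that[unfolded P_def] \<open>0 < m\<close> d] q(1)
      by (simp add: s_def N_def J0_def)
    ultimately show ?thesis
      by auto
  qed
  finally show ?thesis
    by (simp add: C_def J0_def)
qed

theorem proposition4p2:
  fixes a :: "'a :: {field, finite}"
    and q e r :: nat and h :: int
  assumes "prime_power q"
    and "card (UNIV :: 'a set) = q ^ e"
    and "even e" and "e \<ge> 2"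
    and "r > 0"
    and "a \<noteq> 0"
    and "int (r mod (\<Sum>i<e. q ^ i)) = h * int q + 1"
    and "\<not> (int q + 1) dvd h"
  shows "\<not> bij (\<lambda>x :: 'a. x ^ r * (x ^ (q - 1) + a))"
proof
  assume bij: "bij (\<lambda>x :: 'a. x ^ r * (x ^ (q - 1) + a))"
  have q: "2 \<le> q"
    using assms(1) by (rule prime_power_ge_two)
  note frob = prime_power_card_frobenius[OF assms(1,2)]
  obtain m where e: "e = 2 * m" and "0 < m"
    using assms(3,4) by (auto elim!: evenE)
  define s where "s = (\<Sum>i<m. q ^ (2 * i))"
  have l: "(\<Sum>i<e. q ^ i) = (q + 1) * s"
    unfolding s_def e by (rule sum_power_double_upper)
  obtain d where d: "d < q" "(q + 1) dvd r + d"
    by (rule complement_mod_succ_less[OF assms(7) _ assms(8)]) (simp only: l dvd_triv_left)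
  have "0 < s"
    unfolding s_def using \<open>0 < m\<close> by (intro sum_pos2[of _ 0]) auto
  moreover have "card (UNIV :: 'a set) - 1 = (q - 1) * ((q + 1) * s)"
    using pred_mult_sum_power[of q e] unfolding l assms(2) by (rule sym)
  ultimately have "(\<Sum>x\<in>UNIV. (x ^ r * (x ^ (q - 1) + a)) ^ ((q - 1) * s)) = 0"
    using bij q by (intro bij_sum_power_eq_zero) simp_all
  moreover have "(\<Sum>x\<in>UNIV. (x ^ r * (x ^ (q - 1) + a)) ^ ((q - 1) * s))
      = - (\<Prod>i<m. (- (a ^ q ^ (2 * i))) ^ (q - 1 - d))"
    unfolding s_def using assms(2,5) e \<open>0 < m\<close> d
    by (intro sum_UNIV_power_binomial_eq[OF q frob]) simp_all
  ultimately show False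
    using assms(6) by simp
qed

end
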